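(* For all $n\ge2$ and all $x,y\in\mathbb{H}^n$, $$\mathrm{th}\frac{\rho_{\mathbb{H}^n}(x,y)}{2}\le b_{\mathbb{H}^n,2}(x,y)\le\sqrt2\,\mathrm{th}\frac{\rho_{\mathbb{H}^n}(x,y)}{2},$$ and the constants $1$ and $\sqrt2$ are the best possible.
   Context: $\mathbb{H}^n=\{(x_1,\dots,x_n)\in\mathbb{R}^n:x_n>0\}$ is the upper half-space, and $d_{\mathbb{H}^n}(x)=x_n$ is the distance to its boundary. The hyperbolic metric of $\mathbb{H}^n$ is given by $\mathrm{ch}\,\rho_{\mathbb{H}^n}(x,y)=1+\frac{|x-y|^2}{2d_{\mathbb{H}^n}(x)d_{\mathbb{H}^n}(y)}$. For a domain $G\subsetneq\mathbb{R}^n$ and $p\ge1$, the Barrlund metric is $b_{G,p}(x,y)=\sup_{z\in\partial G}\frac{|x-y|}{(|x-z|^p+|z-y|^p)^{1/p}}$. *)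

theory Defs
  imports "HOL-Analysis.Analysis"
begin

text \<open>Upper half-space of a Euclidean space with respect to the coordinate direction e
  (a basis vector playing the role of the last coordinate axis x_n).\<close>
definition upper_half :: "'a::euclidean_space \<Rightarrow> 'a set" where
  "upper_half e = {x. x \<bullet> e > 0}"

definition dH :: "'a::euclidean_space \<Rightarrow> 'a \<Rightarrow> real" where
  "dH e x = x \<bullet> e"

definition rhoH :: "'a::euclidean_space \<Rightarrow> 'a \<Rightarrow> 'a \<Rightarrow> real" where
  "rhoH e x y = arcosh (1 + (dist x y)\<^sup>2 / (2 * dH e x * dH e y))"

definition barrlund :: "'a::euclidean_space set \<Rightarrow> real \<Rightarrow> 'a \<Rightarrow> 'a \<Rightarrow> real" where
  "barrlund G p x y =
     (SUP z\<in>frontier G. dist x y / ((dist x z) powr p + (dist z y) powr p) powr (1 / p))"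

end

theory Submission
  imports Defs "HOL-Real_Asymp.Real_Asymp"
begin

(*
  Write a = x\<bullet>e, b = y\<bullet>e and d = |x - y|. Then th(\<rho>(x,y)/2) = d / sqrt (d^2 + 4ab).
  By the parallelogram law |x - z|^2 + |z - y|^2 = 2|z - m|^2 + d^2/2 with m the midpoint of x
  and y, the supremum defining the Barrlund metric is attained at the orthogonal projection
  of m to the boundary hyperplane, which gives b(x,y) = d / sqrt ((d^2 + (a + b)^2) / 2).
  The two inequalities reduce to (a - b)^2 \<le> d^2 and 4ab \<le> (a + b)^2. The upper bound is an
  equality for points at equal height, and on the vertical ray through e the ratio
  b(e, \<beta>e) / th(\<rho>(e, \<beta>e)/2) = (1 + \<beta>) / sqrt (1 + \<beta>^2) tends to 1 as \<beta> \<rightarrow> \<infinity>.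
*)

lemma tanh_half_arcosh:
  fixes t :: real
  assumes "t \<ge> 1"
  shows "tanh (arcosh t / 2) = sqrt ((t - 1) / (t + 1))"
proof -
  define v where "v = arcosh t / 2"
  have "t = cosh (2 * v)" using assms by (simp add: v_def)
  then have "t - 1 = 2 * (sinh v)\<^sup>2" and "t + 1 = 2 * (cosh v)\<^sup>2"
    by (simp_all add: cosh_double cosh_square_eq)
  then have "(t - 1) / (t + 1) = (tanh v)\<^sup>2"
    by (simp add: tanh_def power_divide)
  moreover have "v \<ge> 0" using assms by (simp add: v_def)
  ultimately show ?thesis by (simp add: v_def)
qed

lemma frontier_upper_half:
  assumes "e \<noteq> 0"
  shows "frontier (upper_half e) = {z. z \<bullet> e = 0}"
  using frontier_halfspace_gt[of e 0] assms by (simp add: upper_half_def inner_commute)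

lemma abs_inner_unit_le_dist:
  fixes x y e :: "'a::real_inner"
  assumes "norm e = 1"
  shows "\<bar>x \<bullet> e - y \<bullet> e\<bar> \<le> dist x y"
  using Cauchy_Schwarz_ineq2[of "x - y" e] assms by (simp add: dist_norm inner_diff_left)

lemma sum_sq_dist_midpoint:
  fixes x y z :: "'a::real_inner"
  shows "(dist x z)\<^sup>2 + (dist z y)\<^sup>2 = 2 * (dist z (midpoint x y))\<^sup>2 + (dist x y)\<^sup>2 / 2"
  unfolding midpoint_def dist_norm power2_norm_eq_inner
  by (simp add: inner_diff_right inner_commute algebra_simps) (simp add: field_simps)

lemma sum_sq_dist_hyperplane_ge:
  fixes x y z e :: "'a::real_inner"
  assumes "norm e = 1" and "z \<bullet> e = 0"
  shows "((dist x y)\<^sup>2 + (x \<bullet> e + y \<bullet> e)\<^sup>2) / 2 \<le> (dist x z)\<^sup>2 + (dist z y)\<^sup>2"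
proof -
  have "\<bar>(x \<bullet> e + y \<bullet> e) / 2\<bar> = \<bar>z \<bullet> e - midpoint x y \<bullet> e\<bar>"
    using assms(2) by (simp add: midpoint_def inner_add_left)
  also have "\<dots> \<le> dist z (midpoint x y)"
    using abs_inner_unit_le_dist[OF assms(1)] .
  finally have "((x \<bullet> e + y \<bullet> e) / 2)\<^sup>2 \<le> (dist z (midpoint x y))\<^sup>2"
    by (metis abs_le_square_iff abs_of_nonneg zero_le_dist)
  then show ?thesis
    unfolding sum_sq_dist_midpoint by (simp add: power_divide)
qed

lemma sum_sq_dist_hyperplane_attained:
  fixes x y e :: "'a::real_inner"
  assumes "norm e = 1"
  defines "z \<equiv> midpoint x y - ((x \<bullet> e + y \<bullet> e) / 2) *\<^sub>R e"
  shows "z \<bullet> e = 0"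
    and "(dist x z)\<^sup>2 + (dist z y)\<^sup>2 = ((dist x y)\<^sup>2 + (x \<bullet> e + y \<bullet> e)\<^sup>2) / 2"
proof -
  have "e \<bullet> e = 1" using assms(1) by (simp add: norm_eq_1)
  then show "z \<bullet> e = 0"
    by (simp add: z_def midpoint_def inner_add_left inner_diff_left)
  show "(dist x z)\<^sup>2 + (dist z y)\<^sup>2 = ((dist x y)\<^sup>2 + (x \<bullet> e + y \<bullet> e)\<^sup>2) / 2"
    unfolding sum_sq_dist_midpoint
    using assms(1) by (simp add: z_def dist_norm power_divide field_simps)
qed

lemma barrlund_2_eq_SUP:
  "barrlund G 2 x y = (SUP z\<in>frontier G. dist x y / sqrt ((dist x z)\<^sup>2 + (dist z y)\<^sup>2))"
  by (simp add: barrlund_def powr_half_sqrt)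

lemma barrlund_upper_half:
  fixes x y e :: "'a::euclidean_space"
  assumes e: "norm e = 1" and "x \<in> upper_half e" and "y \<in> upper_half e"
  shows "barrlund (upper_half e) 2 x y
           = dist x y / sqrt (((dist x y)\<^sup>2 + (x \<bullet> e + y \<bullet> e)\<^sup>2) / 2)"
proof -
  define S where "S = ((dist x y)\<^sup>2 + (x \<bullet> e + y \<bullet> e)\<^sup>2) / 2"
  have "S > 0"
    using assms by (simp add: S_def upper_half_def add_nonneg_pos)
  have "e \<noteq> 0" using e by auto
  have "(SUP z\<in>{z. z \<bullet> e = 0}. dist x y / sqrt ((dist x z)\<^sup>2 + (dist z y)\<^sup>2))
          = dist x y / sqrt S"
  proof (rule cSup_eq_maximum)
    show "dist x y / sqrt S \<in> (\<lambda>z. dist x y / sqrt ((dist x z)\<^sup>2 + (dist z y)\<^sup>2)) ` {z. z \<bullet> e = 0}"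
      using sum_sq_dist_hyperplane_attained[OF e, of x y] unfolding S_def by force
  next
    fix w assume "w \<in> (\<lambda>z. dist x y / sqrt ((dist x z)\<^sup>2 + (dist z y)\<^sup>2)) ` {z. z \<bullet> e = 0}"
    then obtain z where "z \<bullet> e = 0" and w: "w = dist x y / sqrt ((dist x z)\<^sup>2 + (dist z y)\<^sup>2)"
      by auto
    then have "sqrt S \<le> sqrt ((dist x z)\<^sup>2 + (dist z y)\<^sup>2)"
      using sum_sq_dist_hyperplane_ge[OF e] by (simp add: S_def)
    then show "w \<le> dist x y / sqrt S"
      unfolding w using \<open>S > 0\<close> by (simp add: divide_left_mono)
  qed
  then show ?thesis
    by (simp add: barrlund_2_eq_SUP frontier_upper_half[OF \<open>e \<noteq> 0\<close>] S_def)
qed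

lemma tanh_half_rhoH:
  fixes x y e :: "'a::euclidean_space"
  assumes "x \<in> upper_half e" and "y \<in> upper_half e"
  shows "tanh (rhoH e x y / 2) = dist x y / sqrt ((dist x y)\<^sup>2 + 4 * (x \<bullet> e) * (y \<bullet> e))"
proof -
  define t where "t = 1 + (dist x y)\<^sup>2 / (2 * (x \<bullet> e) * (y \<bullet> e))"
  have pos: "x \<bullet> e > 0" "y \<bullet> e > 0" using assms by (auto simp: upper_half_def)
  then have "t \<ge> 1" by (simp add: t_def)
  have "(t - 1) / (t + 1) = (dist x y)\<^sup>2 / ((dist x y)\<^sup>2 + 4 * (x \<bullet> e) * (y \<bullet> e))"
    using pos by (simp add: t_def field_simps)
  then show ?thesis
    using tanh_half_arcosh[OF \<open>t \<ge> 1\<close>]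
    by (simp add: rhoH_def dH_def t_def real_sqrt_divide)
qed

lemma divide_sqrt_antimono:
  fixes u p q :: real
  assumes "u \<ge> 0" and "0 < p" and "p \<le> q"
  shows "u / sqrt q \<le> u / sqrt p"
  using assms by (simp add: divide_left_mono)

lemma tanh_half_rhoH_le_barrlund:
  fixes x y e :: "'a::euclidean_space"
  assumes e: "norm e = 1" and x: "x \<in> upper_half e" and y: "y \<in> upper_half e"
  shows "tanh (rhoH e x y / 2) \<le> barrlund (upper_half e) 2 x y"
proof -
  define a b where "a = x \<bullet> e" and "b = y \<bullet> e"
  have "a > 0" "b > 0" using x y by (auto simp: a_def b_def upper_half_def)
  have "(a - b)\<^sup>2 \<le> (dist x y)\<^sup>2"
    using abs_inner_unit_le_dist[OF e, of x y] unfolding a_def b_def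
    by (metis abs_le_square_iff abs_of_nonneg zero_le_dist)
  then have "((dist x y)\<^sup>2 + (a + b)\<^sup>2) / 2 \<le> (dist x y)\<^sup>2 + 4 * a * b"
    using mult_pos_pos[OF \<open>a > 0\<close> \<open>b > 0\<close>] by (simp add: power2_eq_square algebra_simps)
  then show ?thesis
    using \<open>a > 0\<close> \<open>b > 0\<close>
    by (simp add: tanh_half_rhoH[OF x y] barrlund_upper_half[OF e x y] a_def b_def
        divide_sqrt_antimono add_nonneg_pos)
qed

lemma barrlund_le_sqrt2_tanh_half_rhoH:
  fixes x y e :: "'a::euclidean_space"
  assumes e: "norm e = 1" and x: "x \<in> upper_half e" and y: "y \<in> upper_half e"
  shows "barrlund (upper_half e) 2 x y \<le> sqrt 2 * tanh (rhoH e x y / 2)"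
proof -
  define a b where "a = x \<bullet> e" and "b = y \<bullet> e"
  have "a > 0" "b > 0" using x y by (auto simp: a_def b_def upper_half_def)
  have "4 * a * b \<le> (a + b)\<^sup>2"
    using sum_squares_ge_zero[of "a - b" 0] by (simp add: power2_eq_square algebra_simps)
  then have "((dist x y)\<^sup>2 + 4 * a * b) / 2 \<le> ((dist x y)\<^sup>2 + (a + b)\<^sup>2) / 2"
    by simp
  then have "barrlund (upper_half e) 2 x y \<le> dist x y / sqrt (((dist x y)\<^sup>2 + 4 * a * b) / 2)"
    using \<open>a > 0\<close> \<open>b > 0\<close>
    by (simp add: barrlund_upper_half[OF e x y] a_def b_def divide_sqrt_antimono add_nonneg_pos)
  then show ?thesis
    by (simp add: tanh_half_rhoH[OF x y] a_def b_def real_sqrt_divide mult_ac)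
qed

lemma barrlund_eq_sqrt2_tanh_half_rhoH:
  fixes x y e :: "'a::euclidean_space"
  assumes e: "norm e = 1" and x: "x \<in> upper_half e" and y: "y \<in> upper_half e"
    and "x \<bullet> e = y \<bullet> e"
  shows "barrlund (upper_half e) 2 x y = sqrt 2 * tanh (rhoH e x y / 2)"
  using assms by (simp add: barrlund_upper_half tanh_half_rhoH real_sqrt_divide power2_eq_square mult_ac)

lemma barrlund_upper_half_vertical:
  fixes e :: "'a::euclidean_space"
  assumes e: "norm e = 1" and "\<beta> > 0"
  shows "barrlund (upper_half e) 2 e (\<beta> *\<^sub>R e)
           = (1 + \<beta>) / sqrt (1 + \<beta>\<^sup>2) * tanh (rhoH e e (\<beta> *\<^sub>R e) / 2)"
proof -
  have ee: "e \<bullet> e = 1" using e by (simp add: norm_eq_1)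
  have x: "e \<in> upper_half e" and y: "\<beta> *\<^sub>R e \<in> upper_half e"
    using ee \<open>\<beta> > 0\<close> by (simp_all add: upper_half_def)
  have "e - \<beta> *\<^sub>R e = (1 - \<beta>) *\<^sub>R e"
    by (simp add: algebra_simps)
  then have d: "dist e (\<beta> *\<^sub>R e) = \<bar>1 - \<beta>\<bar>"
    using e by (simp add: dist_norm)
  have "((1 - \<beta>)\<^sup>2 + (1 + \<beta>)\<^sup>2) / 2 = 1 + \<beta>\<^sup>2" and "(1 - \<beta>)\<^sup>2 + 4 * \<beta> = (1 + \<beta>)\<^sup>2"
    by (simp_all add: power2_eq_square algebra_simps)
  then show ?thesis
    using \<open>\<beta> > 0\<close>
    by (simp add: barrlund_upper_half[OF e x y] tanh_half_rhoH[OF x y] d ee)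
qed

lemma tanh_half_rhoH_pos:
  fixes x y e :: "'a::euclidean_space"
  assumes "x \<in> upper_half e" and "y \<in> upper_half e" and "x \<noteq> y"
  shows "tanh (rhoH e x y / 2) > 0"
proof -
  have "x \<bullet> e > 0" "y \<bullet> e > 0" using assms by (auto simp: upper_half_def)
  then have "(dist x y)\<^sup>2 + 4 * (x \<bullet> e) * (y \<bullet> e) > 0"
    by (simp add: add_nonneg_pos)
  then show ?thesis
    using assms by (simp add: tanh_half_rhoH)
qed

lemma ex_barrlund_lt_const_tanh_half_rhoH:
  fixes e :: "'a::euclidean_space"
  assumes e: "norm e = 1" and "c > 1"
  shows "\<exists>x\<in>upper_half e. \<exists>y\<in>upper_half e.
           barrlund (upper_half e) 2 x y < c * tanh (rhoH e x y / 2)"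
proof -
  have "((\<lambda>\<beta>::real. (1 + \<beta>) / sqrt (1 + \<beta>\<^sup>2)) \<longlongrightarrow> 1) at_top"
    by real_asymp
  then have "\<forall>\<^sub>F \<beta> in at_top. (1 + \<beta>) / sqrt (1 + \<beta>\<^sup>2) < c \<and> \<beta> > 1"
    using \<open>c > 1\<close> by (intro eventually_conj order_tendstoD(2) eventually_gt_at_top)
  then obtain \<beta> where ratio: "(1 + \<beta>) / sqrt (1 + \<beta>\<^sup>2) < c" and "\<beta> > 1"
    using eventually_happens'[OF trivial_limit_at_top_linorder] by blast
  have ee: "e \<bullet> e = 1" using e by (simp add: norm_eq_1)
  have x: "e \<in> upper_half e" and y: "\<beta> *\<^sub>R e \<in> upper_half e"
    using \<open>\<beta> > 1\<close> ee by (simp_all add: upper_half_def)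
  have "norm (\<beta> *\<^sub>R e) \<noteq> norm e"
    using \<open>\<beta> > 1\<close> e by simp
  then have "e \<noteq> \<beta> *\<^sub>R e" by metis
  have "barrlund (upper_half e) 2 e (\<beta> *\<^sub>R e)
          = (1 + \<beta>) / sqrt (1 + \<beta>\<^sup>2) * tanh (rhoH e e (\<beta> *\<^sub>R e) / 2)"
    using barrlund_upper_half_vertical[OF e] \<open>\<beta> > 1\<close> by simp
  also have "\<dots> < c * tanh (rhoH e e (\<beta> *\<^sub>R e) / 2)"
    using ratio tanh_half_rhoH_pos[OF x y \<open>e \<noteq> \<beta> *\<^sub>R e\<close>] by (rule mult_strict_right_mono)
  finally show ?thesis using x y by blast
qed

lemma ex_const_tanh_half_rhoH_lt_barrlund:
  fixes e u :: "'a::euclidean_space"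
  assumes e: "norm e = 1" and "u \<noteq> 0" and "u \<bullet> e = 0" and "c < sqrt 2"
  shows "\<exists>x\<in>upper_half e. \<exists>y\<in>upper_half e.
           c * tanh (rhoH e x y / 2) < barrlund (upper_half e) 2 x y"
proof -
  have ee: "e \<bullet> e = 1" using e by (simp add: norm_eq_1)
  then have x: "e \<in> upper_half e" and y: "e + u \<in> upper_half e"
    and level: "e \<bullet> e = (e + u) \<bullet> e"
    using \<open>u \<bullet> e = 0\<close> by (simp_all add: upper_half_def inner_add_left)
  have "e \<noteq> e + u" using \<open>u \<noteq> 0\<close> by simp
  have "c * tanh (rhoH e e (e + u) / 2) < sqrt 2 * tanh (rhoH e e (e + u) / 2)"
    using \<open>c < sqrt 2\<close> tanh_half_rhoH_pos[OF x y \<open>e \<noteq> e + u\<close>] by (rule mult_strict_right_mono)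
  also have "\<dots> = barrlund (upper_half e) 2 e (e + u)"
    using barrlund_eq_sqrt2_tanh_half_rhoH[OF e x y level] ..
  finally show ?thesis using x y by blast
qed

lemma ex_Basis_orthogonal:
  fixes e :: "'a::euclidean_space"
  assumes "e \<in> Basis" and "DIM('a) \<ge> 2"
  obtains u where "u \<noteq> 0" and "u \<bullet> e = 0"
proof -
  have "\<not> (Basis :: 'a set) \<subseteq> {e}"
  proof
    assume "(Basis :: 'a set) \<subseteq> {e}"
    then have "DIM('a) \<le> card {e}" by (intro card_mono) auto
    with assms(2) show False by simp
  qed
  then obtain u where "u \<in> Basis" and "u \<noteq> e" by blast
  with assms(1) show thesis
    using that[of u] by (simp add: inner_not_same_Basis nonzero_Basis)
qed

theorem lemma3p7:
  fixes e :: "'a::euclidean_space"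
  assumes "e \<in> Basis" and "DIM('a) \<ge> 2"
  shows "(\<forall>x\<in>upper_half e. \<forall>y\<in>upper_half e.
            tanh (rhoH e x y / 2) \<le> barrlund (upper_half e) 2 x y \<and>
            barrlund (upper_half e) 2 x y \<le> sqrt 2 * tanh (rhoH e x y / 2))
       \<and> (\<forall>c>1. \<exists>x\<in>upper_half e. \<exists>y\<in>upper_half e.
            barrlund (upper_half e) 2 x y < c * tanh (rhoH e x y / 2))
       \<and> (\<forall>c<sqrt 2. \<exists>x\<in>upper_half e. \<exists>y\<in>upper_half e.
            c * tanh (rhoH e x y / 2) < barrlund (upper_half e) 2 x y)"
proof -
  have e: "norm e = 1" using assms(1) by simp
  obtain u where "u \<noteq> 0" and "u \<bullet> e = 0"
    using ex_Basis_orthogonal[OF assms] .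
  then show ?thesis
    using tanh_half_rhoH_le_barrlund[OF e] barrlund_le_sqrt2_tanh_half_rhoH[OF e]
      ex_barrlund_lt_const_tanh_half_rhoH[OF e] ex_const_tanh_half_rhoH_lt_barrlund[OF e]
    by blast
qed

end
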